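(* Let $n,k$ be integers with $2\le k\le n-1$, let $\varepsilon,\delta>0$, and let $$m:=\frac{12n(n-1)^2}{\varepsilon^2(n-k)^2k}\ln\frac{2n^2}{\delta}.$$ Let $\mathcal{I}=(I_1,\dots,I_m)$ be a sequence of random $k$-element subsets of $[n]=\{1,\dots,n\}$, sampled independently and uniformly from all $k$-element subsets of $[n]$, and define $$\mathcal{S}_{\mathcal{I}}:=\{M\in\mathbb{R}^{n\times n}: M_{I_i}\succeq 0 \text{ for all } i\in[m]\}.$$ Then with probability at least $1-\delta$, $$\overline{\mathrm{dist}}_F(\mathcal{S}_{\mathcal{I}},\mathcal{S}^n_+)\le (1+\varepsilon)\frac{n-k}{n+k-2}.$$
   Context: For $M\in\mathbb{R}^{n\times n}$ and $J\subseteq[n]$, $M_J$ is the principal submatrix of $M$ with rows and columns indexed by $J$; $A\succeq 0$ means $A$ is a real symmetric positive semidefinite (PSD) matrix. $\mathcal{S}^n_+$ denotes the cone of $n\times n$ real symmetric PSD matrices. For a matrix $M$, $\mathrm{dist}_F(M,\mathcal{S}^n_+)=\inf_{N\in\mathcal{S}^n_+}\|M-N\|_F$, where $\|\cdot\|_F$ is the Frobenius norm. For a set $\mathcal{K}$ of $n\times n$ matrices, $\overline{\mathrm{dist}}_F(\mathcal{K},\mathcal{S}^n_+)=\sup_{M\in\mathcal{K},\ \|M\|_F=1}\mathrm{dist}_F(M,\mathcal{S}^n_+)$. *)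

theory Defs
  imports "HOL-Probability.Probability"
begin

text \<open>Real matrices are represented as functions nat => nat => real; only the
entries with indices in {..<n} (standing for [n] = {1..n}) matter.\<close>

definition psd_sub :: "(nat \<Rightarrow> nat \<Rightarrow> real) \<Rightarrow> nat set \<Rightarrow> bool" where
  "psd_sub M J \<longleftrightarrow> (\<forall>i\<in>J. \<forall>j\<in>J. M i j = M j i) \<and>
     (\<forall>x::nat \<Rightarrow> real. 0 \<le> (\<Sum>i\<in>J. \<Sum>j\<in>J. x i * M i j * x j))"

definition frob :: "nat \<Rightarrow> (nat \<Rightarrow> nat \<Rightarrow> real) \<Rightarrow> real" where
  "frob n M = sqrt (\<Sum>i<n. \<Sum>j<n. (M i j)\<^sup>2)"

definition dist_psd :: "nat \<Rightarrow> (nat \<Rightarrow> nat \<Rightarrow> real) \<Rightarrow> real" where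
  "dist_psd n M = Inf {frob n (\<lambda>i j. M i j - N i j) | N. psd_sub N {..<n}}"

definition dist_bar :: "nat \<Rightarrow> (nat \<Rightarrow> nat \<Rightarrow> real) set \<Rightarrow> real" where
  "dist_bar n K = Sup {dist_psd n M | M. M \<in> K \<and> frob n M = 1}"

definition S_I :: "nat \<Rightarrow> (nat \<Rightarrow> nat set) \<Rightarrow> (nat \<Rightarrow> nat \<Rightarrow> real) set" where
  "S_I m I = {M. \<forall>i<m. psd_sub M (I i)}"

definition ksubsets :: "nat \<Rightarrow> nat \<Rightarrow> nat set set" where
  "ksubsets n k = {J. J \<subseteq> {..<n} \<and> card J = k}"

text \<open>m independent uniform samples from the k-subsets of [n]: uniform distribution
on sequences (extensional functions on {..<m}) of k-subsets.\<close>
definition sample_pmf :: "nat \<Rightarrow> nat \<Rightarrow> nat \<Rightarrow> (nat \<Rightarrow> nat set) pmf" where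
  "sample_pmf n k m = pmf_of_set (PiE {..<m} (\<lambda>_. ksubsets n k))"

end

theory Submission
  imports Defs
begin

(* Let C i j count the sets I_t containing both i and j. Its mean is d = m k / n for i = j and
   e = m k (k - 1) / (n (n - 1)) for i ~= j, and by multiplicative Chernoff bounds and a union
   bound over the n^2 pairs, with probability at least 1 - delta every C i j lies within
   tau = eps (d - e) / 2 of its mean. For M in S_I the Hadamard product C o M is the sum of
   the blocks M_{I_t}, padded by zeros, hence PSD. So N = 2 / (d + e) (C o M) is a PSD
   matrix with |M i j - N i j| <= (d - e + 2 tau) / (d + e) |M i j| entrywise, and
   (d - e + 2 tau) / (d + e) = (1 + eps) (n - k) / (n + k - 2). *)

definition hits :: "nat \<Rightarrow> 'a set \<Rightarrow> (nat \<Rightarrow> 'a) \<Rightarrow> nat" where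
  "hits m B f = card {t \<in> {..<m}. f t \<in> B}"

lemma ln_one_plus_ge:
  fixes u :: real
  assumes "0 \<le> u"
  shows "2 * u / (2 + u) \<le> ln (1 + u)"
proof -
  let ?g = "\<lambda>x. ln (1 + x) - 2 * x / (2 + x)"
  have "?g 0 \<le> ?g u"
  proof (rule DERIV_nonneg_imp_nondecreasing[OF assms])
    fix x :: real assume x: "0 \<le> x" "x \<le> u"
    have "(?g has_real_derivative (1 / (1 + x) - 4 / (2 + x)\<^sup>2)) (at x)"
      using x by (auto intro!: derivative_eq_intros simp: field_simps power2_eq_square)
    moreover have "1 / (1 + x) - 4 / (2 + x)\<^sup>2 = x\<^sup>2 / ((1 + x) * (2 + x)\<^sup>2)"
      using x by (simp add: divide_simps) (simp add: power2_eq_square algebra_simps)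
    ultimately show "\<exists>y. (?g has_real_derivative y) (at x) \<and> 0 \<le> y"
      using x by fastforce
  qed
  then show ?thesis by simp
qed

lemma exp_minus_le_quadratic:
  fixes u :: real
  assumes "0 \<le> u"
  shows "exp (- u) \<le> 1 - u + u\<^sup>2 / 2"
proof -
  let ?g = "\<lambda>x. 1 - x + x\<^sup>2 / 2 - exp (- x)"
  have "?g 0 \<le> ?g u"
  proof (rule DERIV_nonneg_imp_nondecreasing[OF assms])
    fix x :: real
    have "(?g has_real_derivative (x - 1 + exp (- x))) (at x)"
      by (auto intro!: derivative_eq_intros)
    moreover have "0 \<le> x - 1 + exp (- x)"
      using exp_ge_add_one_self[of "- x"] by simp
    ultimately show "\<exists>y. (?g has_real_derivative y) (at x) \<and> 0 \<le> y" by blast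
  qed
  then show ?thesis by simp
qed

lemma sum_exp_hits_PiE:
  fixes s :: real
  assumes "finite K"
  shows "(\<Sum>f\<in>PiE {..<m} (\<lambda>_. K). exp (s * hits m B f))
           = (real (card (K - B)) + real (card (K \<inter> B)) * exp s) ^ m"
proof -
  have "exp (s * hits m B f) = (\<Prod>t<m. if f t \<in> B then exp s else 1)" for f
    by (simp add: hits_def prod.If_cases Int_def exp_of_nat_mult[symmetric] mult.commute)
  then have "(\<Sum>f\<in>PiE {..<m} (\<lambda>_. K). exp (s * hits m B f))
               = (\<Prod>t<m. \<Sum>J\<in>K. if J \<in> B then exp s else 1)"
    using prod_sum_PiE[of "{..<m}" "\<lambda>_. K" "\<lambda>_ J. if J \<in> B then exp s else 1"] assms
    by simp
  also have "(\<Sum>J\<in>K. if J \<in> B then exp s else 1) = real (card (K - B)) + real (card (K \<inter> B)) * exp s"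
    using assms by (simp add: sum.If_cases Diff_eq)
  finally show ?thesis by simp
qed

lemma sum_exp_hits_PiE_le:
  fixes s :: real
  assumes "finite K" "K \<noteq> {}"
  shows "(\<Sum>f\<in>PiE {..<m} (\<lambda>_. K). exp (s * hits m B f))
           \<le> card (PiE {..<m} (\<lambda>_. K)) * exp (m * (card (K \<inter> B) / card K) * (exp s - 1))"
proof -
  define p where "p = card (K \<inter> B) / card K"
  have "real (card K) = card (K \<inter> B) + card (K - B)"
    using card_Int_Diff[OF assms(1), of B] by simp
  then have "real (card (K - B)) + card (K \<inter> B) * exp s = card K + card (K \<inter> B) * (exp s - 1)"
    by (simp add: algebra_simps)
  also have "\<dots> = card K * (1 + p * (exp s - 1))"
    using assms by (simp add: p_def field_simps card_gt_0_iff)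
  also have "\<dots> \<le> card K * exp (p * (exp s - 1))"
    by (intro mult_left_mono) (simp_all add: exp_ge_add_one_self add.commute)
  finally have "(real (card (K - B)) + card (K \<inter> B) * exp s) ^ m \<le> (card K * exp (p * (exp s - 1))) ^ m"
    by (intro power_mono) simp_all
  then show ?thesis
    using assms(1) by (simp add: sum_exp_hits_PiE card_PiE power_mult_distrib p_def
        exp_of_nat_mult[symmetric] mult.assoc)
qed

lemma prob_hits_exp_markov:
  fixes s a \<mu> :: real
  assumes "finite K" "K \<noteq> {}" and \<mu>: "\<mu> = m * (card (K \<inter> B) / card K)"
  shows "measure_pmf.prob (pmf_of_set (PiE {..<m} (\<lambda>_. K))) {f. s * a \<le> s * hits m B f}
           \<le> exp (\<mu> * (exp s - 1) - s * a)"
proof -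
  define S where "S = PiE {..<m} (\<lambda>_. K)"
  define A where "A = S \<inter> {f. s * a \<le> s * hits m B f}"
  have S: "finite S" "S \<noteq> {}"
    using assms by (auto simp: S_def finite_PiE PiE_eq_empty_iff)
  have "real (card A) * exp (s * a) = (\<Sum>f\<in>A. exp (s * a))"
    by simp
  also have "\<dots> \<le> (\<Sum>f\<in>A. exp (s * hits m B f))"
    by (intro sum_mono) (auto simp: A_def)
  also have "\<dots> \<le> (\<Sum>f\<in>S. exp (s * hits m B f))"
    using S by (intro sum_mono2) (auto simp: A_def)
  also have "\<dots> \<le> card S * exp (\<mu> * (exp s - 1))"
    using sum_exp_hits_PiE_le[OF assms(1,2)] by (simp add: S_def \<mu> mult.assoc)
  finally have "card A / card S \<le> exp (\<mu> * (exp s - 1)) / exp (s * a)"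
    using S by (simp add: field_simps card_gt_0_iff)
  then show ?thesis
    using S by (simp add: measure_pmf_of_set A_def S_def exp_diff)
qed

lemma prob_hits_ge_chernoff:
  fixes u \<mu> :: real
  assumes "finite K" "K \<noteq> {}" and \<mu>: "\<mu> = m * (card (K \<inter> B) / card K)"
    and u: "0 \<le> u" "u \<le> 1"
  shows "measure_pmf.prob (pmf_of_set (PiE {..<m} (\<lambda>_. K))) {f. (1 + u) * \<mu> \<le> hits m B f}
           \<le> exp (- \<mu> * u\<^sup>2 / 3)"
proof -
  let ?P = "pmf_of_set (PiE {..<m} (\<lambda>_. K))"
  define s where "s = ln (1 + u)"
  have \<mu>0: "0 \<le> \<mu>"
    using \<mu> by simp
  have s: "0 \<le> s" "exp s = 1 + u"
    using u by (simp_all add: s_def)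
  have "measure_pmf.prob ?P {f. (1 + u) * \<mu> \<le> hits m B f}
          \<le> measure_pmf.prob ?P {f. s * ((1 + u) * \<mu>) \<le> s * hits m B f}"
    using s by (intro measure_pmf.finite_measure_mono) (auto intro: mult_left_mono)
  also have "\<dots> \<le> exp (\<mu> * u - s * ((1 + u) * \<mu>))"
    using prob_hits_exp_markov[OF assms(1-3), of s "(1 + u) * \<mu>"] s by simp
  also have "\<dots> \<le> exp (- \<mu> * u\<^sup>2 / 3)"
  proof -
    have "u\<^sup>2 / 3 \<le> u\<^sup>2 / (2 + u)"
      using u by (intro divide_left_mono) auto
    also have "\<dots> = (1 + u) * (2 * u / (2 + u)) - u"
      using u by (simp add: field_simps power2_eq_square)
    also have "\<dots> \<le> (1 + u) * s - u"
      using mult_left_mono[OF ln_one_plus_ge[OF u(1)], of "1 + u"] u by (simp add: s_def)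
    finally show ?thesis
      using mult_left_mono[of "u\<^sup>2 / 3" "(1 + u) * s - u" \<mu>] \<mu>0 by (simp add: algebra_simps)
  qed
  finally show ?thesis .
qed

lemma prob_hits_le_chernoff:
  fixes u \<mu> :: real
  assumes "finite K" "K \<noteq> {}" and \<mu>: "\<mu> = m * (card (K \<inter> B) / card K)"
    and u: "0 \<le> u"
  shows "measure_pmf.prob (pmf_of_set (PiE {..<m} (\<lambda>_. K))) {f. hits m B f \<le> (1 - u) * \<mu>}
           \<le> exp (- \<mu> * u\<^sup>2 / 2)"
proof -
  let ?P = "pmf_of_set (PiE {..<m} (\<lambda>_. K))"
  have "measure_pmf.prob ?P {f. hits m B f \<le> (1 - u) * \<mu>}
          \<le> measure_pmf.prob ?P {f. - u * ((1 - u) * \<mu>) \<le> - u * hits m B f}"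
    using u by (intro measure_pmf.finite_measure_mono) (auto intro: mult_left_mono)
  also have "\<dots> \<le> exp (\<mu> * (exp (- u) - 1) + u * ((1 - u) * \<mu>))"
    using prob_hits_exp_markov[OF assms(1-3), of "- u" "(1 - u) * \<mu>"] by simp
  also have "\<dots> \<le> exp (- \<mu> * u\<^sup>2 / 2)"
  proof -
    have "\<mu> * (exp (- u) - 1) \<le> \<mu> * (- u + u\<^sup>2 / 2)"
      using exp_minus_le_quadratic[OF u] \<mu> by (intro mult_left_mono) auto
    then show ?thesis
      by (simp add: algebra_simps power2_eq_square)
  qed
  finally show ?thesis .
qed

lemma prob_hits_deviation_chernoff:
  fixes \<tau> \<mu> :: real
  assumes "finite K" "K \<noteq> {}" and \<mu>: "\<mu> = m * (card (K \<inter> B) / card K)"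
    and \<tau>: "0 \<le> \<tau>" "\<tau> \<le> \<mu>"
  shows "measure_pmf.prob (pmf_of_set (PiE {..<m} (\<lambda>_. K))) {f. \<tau> < \<bar>hits m B f - \<mu>\<bar>}
           \<le> 2 * exp (- \<tau>\<^sup>2 / (3 * \<mu>))"
proof (cases "\<mu> = 0")
  case True
  \<comment> \<open>the bound reads 2 here, since division by zero yields 0\<close>
  then show ?thesis
    using measure_pmf.prob_le_1 by (simp add: order_trans[of _ 1 2])
next
  let ?P = "pmf_of_set (PiE {..<m} (\<lambda>_. K))"
  case False
  define u where "u = \<tau> / \<mu>"
  have u: "0 \<le> u" "u \<le> 1" "\<tau> = u * \<mu>"
    using \<tau> False by (auto simp: u_def)
  have "measure_pmf.prob ?P {f. \<tau> < \<bar>hits m B f - \<mu>\<bar>}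
          \<le> measure_pmf.prob ?P ({f. (1 + u) * \<mu> \<le> hits m B f} \<union> {f. hits m B f \<le> (1 - u) * \<mu>})"
    using u by (intro measure_pmf.finite_measure_mono) (auto simp: algebra_simps)
  also have "\<dots> \<le> measure_pmf.prob ?P {f. (1 + u) * \<mu> \<le> hits m B f}
                 + measure_pmf.prob ?P {f. hits m B f \<le> (1 - u) * \<mu>}"
    by (rule measure_subadditive) auto
  also have "\<dots> \<le> exp (- \<mu> * u\<^sup>2 / 3) + exp (- \<mu> * u\<^sup>2 / 2)"
    by (intro add_mono prob_hits_ge_chernoff prob_hits_le_chernoff assms u(1,2))
  also have "\<dots> \<le> 2 * exp (- \<mu> * u\<^sup>2 / 3)"
    using \<tau> by (simp add: u(3) divide_simps)
  also have "- \<mu> * u\<^sup>2 / 3 = - \<tau>\<^sup>2 / (3 * \<mu>)"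
    using False by (simp add: u(3) power2_eq_square)
  finally show ?thesis .
qed

lemma card_subsets_containing:
  assumes "finite A" "F \<subseteq> A" "card F \<le> k"
  shows "card {J. J \<subseteq> A \<and> card J = k \<and> F \<subseteq> J} = (card A - card F) choose (k - card F)"
proof -
  have fin: "finite F" "\<And>J. J \<subseteq> A \<Longrightarrow> finite J"
    using assms finite_subset by blast+
  have "{J. J \<subseteq> A \<and> card J = k \<and> F \<subseteq> J} = (\<union>) F ` {J. J \<subseteq> A - F \<and> card J = k - card F}"
  proof (intro equalityI subsetI)
    fix J assume J: "J \<in> {J. J \<subseteq> A \<and> card J = k \<and> F \<subseteq> J}"
    then have "card (J - F) = k - card F"
      using fin by (auto simp: card_Diff_subset)
    then show "J \<in> (\<union>) F ` {J. J \<subseteq> A - F \<and> card J = k - card F}"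
      using J by (auto intro!: image_eqI[of _ _ "J - F"])
  next
    fix J assume "J \<in> (\<union>) F ` {J. J \<subseteq> A - F \<and> card J = k - card F}"
    then obtain J' where J': "J' \<subseteq> A - F" "card J' = k - card F" "J = F \<union> J'"
      by auto
    moreover have "card (F \<union> J') = card F + card J'"
      using J' fin assms(1) by (intro card_Un_disjoint) auto
    ultimately show "J \<in> {J. J \<subseteq> A \<and> card J = k \<and> F \<subseteq> J}"
      using assms by auto
  qed
  moreover have "inj_on ((\<union>) F) {J. J \<subseteq> A - F \<and> card J = k - card F}"
    by (rule inj_onI) blast
  ultimately show ?thesis
    using assms fin by (simp add: card_image n_subsets card_Diff_subset)
qed

lemma finite_ksubsets: "finite (ksubsets n k)"
  unfolding ksubsets_def by (rule finite_subset[of _ "Pow {..<n}"]) auto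

lemma lessThan_in_ksubsets: "k \<le> n \<Longrightarrow> {..<k} \<in> ksubsets n k"
  by (auto simp: ksubsets_def)

lemma card_ksubsets: "card (ksubsets n k) = n choose k"
  unfolding ksubsets_def using n_subsets[of "{..<n}" k] by simp

lemma ksubsets_fraction_containing:
  assumes "i < n" "j < n" "2 \<le> k" "k \<le> n"
  shows "card (ksubsets n k \<inter> {J. i \<in> J \<and> j \<in> J}) / card (ksubsets n k)
           = (if i = j then real k / real n else real k * (real k - 1) / (real n * (real n - 1)))"
proof -
  have count: "card (ksubsets n k \<inter> {J. i \<in> J \<and> j \<in> J}) = (n - card {i, j}) choose (k - card {i, j})"
  proof -
    have "ksubsets n k \<inter> {J. i \<in> J \<and> j \<in> J} = {J. J \<subseteq> {..<n} \<and> card J = k \<and> {i, j} \<subseteq> J}"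
      by (auto simp: ksubsets_def)
    moreover have "card {i, j} \<le> k"
      using assms by (simp add: card_insert_if)
    ultimately show ?thesis
      using card_subsets_containing[of "{..<n}" "{i, j}" k] assms by simp
  qed
  have choose_pos: "real (n choose k) > 0"
    using assms by simp
  have absorb: "k * (n choose k) = n * ((n - 1) choose (k - 1))"
    "(k - 1) * ((n - 1) choose (k - 1)) = (n - 1) * ((n - 2) choose (k - 2))"
    using assms times_binomial_minus1_eq[of k n] times_binomial_minus1_eq[of "k - 1" "n - 1"]
    by (simp_all add: diff_diff_add numeral_2_eq_2)
  show ?thesis
  proof (cases "i = j")
    case True
    have "real k * (n choose k) = real n * ((n - 1) choose (k - 1))"
      using absorb(1) by (metis of_nat_mult)
    then show ?thesis
      using True count choose_pos assms by (simp add: card_ksubsets field_simps)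
  next
    case False
    have "real (k * (k - 1) * (n choose k)) = real (n * (n - 1) * ((n - 2) choose (k - 2)))"
      using absorb by (metis mult.assoc mult.left_commute)
    then have "real k * (real k - 1) * (n choose k) = real n * (real n - 1) * ((n - 2) choose (k - 2))"
      using assms by (simp add: of_nat_diff)
    then show ?thesis
      using False count choose_pos assms by (simp add: card_ksubsets field_simps numeral_2_eq_2)
  qed
qed

definition cooccur :: "nat \<Rightarrow> (nat \<Rightarrow> nat set) \<Rightarrow> nat \<Rightarrow> nat \<Rightarrow> nat" where
  "cooccur m I i j = hits m {J. i \<in> J \<and> j \<in> J} I"

lemma frob_le_scaled:
  assumes "0 \<le> a" and "\<And>i j. i < n \<Longrightarrow> j < n \<Longrightarrow> \<bar>A i j\<bar> \<le> a * \<bar>M i j\<bar>"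
  shows "frob n A \<le> a * frob n M"
proof -
  have "(\<Sum>i<n. \<Sum>j<n. (A i j)\<^sup>2) \<le> (\<Sum>i<n. \<Sum>j<n. a\<^sup>2 * (M i j)\<^sup>2)"
  proof (intro sum_mono)
    fix i j assume "i \<in> {..<n}" "j \<in> {..<n}"
    then have "\<bar>A i j\<bar>\<^sup>2 \<le> (a * \<bar>M i j\<bar>)\<^sup>2"
      using assms by (intro power_mono) auto
    then show "(A i j)\<^sup>2 \<le> a\<^sup>2 * (M i j)\<^sup>2"
      by (simp add: power_mult_distrib)
  qed
  then have "sqrt (\<Sum>i<n. \<Sum>j<n. (A i j)\<^sup>2) \<le> sqrt (a\<^sup>2 * (\<Sum>i<n. \<Sum>j<n. (M i j)\<^sup>2))"
    by (simp add: sum_distrib_left)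
  then show ?thesis
    using assms(1) by (simp add: frob_def real_sqrt_mult)
qed

lemma dist_psd_le_frob_diff:
  assumes "psd_sub N {..<n}"
  shows "dist_psd n M \<le> frob n (\<lambda>i j. M i j - N i j)"
  unfolding dist_psd_def
  by (rule cInf_lower) (use assms in \<open>auto intro: bdd_belowI[of _ 0] simp: frob_def sum_nonneg\<close>)

lemma dist_psd_le_frob: "dist_psd n M \<le> frob n M"
  using dist_psd_le_frob_diff[of "\<lambda>_ _. 0" n M] by (simp add: psd_sub_def)

lemma dist_bar_le:
  assumes "\<exists>M\<in>K. frob n M = 1" and "\<And>M. M \<in> K \<Longrightarrow> frob n M = 1 \<Longrightarrow> dist_psd n M \<le> b"
  shows "dist_bar n K \<le> b"
  unfolding dist_bar_def by (rule cSup_least) (use assms in auto)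

lemma ex_unit_frob_in_S_I:
  assumes "0 < n"
  shows "\<exists>M\<in>S_I m I. frob n M = 1"
proof
  define M where "M i j = (if i = j then 1 / sqrt n else 0)" for i j :: nat
  have "psd_sub M J" for J
    by (auto simp: psd_sub_def M_def if_distrib intro!: sum_nonneg)
  then show "M \<in> S_I m I"
    by (simp add: S_I_def)
  have "(M i j)\<^sup>2 = (if i = j then 1 / n else 0)" for i j
    by (simp add: M_def power_divide)
  then have "(\<Sum>i<n. \<Sum>j<n. (M i j)\<^sup>2) = (\<Sum>i<n. 1 / n)"
    by simp
  then show "frob n M = 1"
    using assms by (simp add: frob_def)
qed

lemma psd_sub_scale:
  assumes "0 \<le> a" "psd_sub M J"
  shows "psd_sub (\<lambda>i j. a * M i j) J"
proof -
  have "(\<Sum>i\<in>J. \<Sum>j\<in>J. x i * (a * M i j) * x j) = a * (\<Sum>i\<in>J. \<Sum>j\<in>J. x i * M i j * x j)" for x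
    by (simp add: sum_distrib_left algebra_simps)
  then show ?thesis
    using assms by (simp add: psd_sub_def)
qed

lemma cooccur_sym: "cooccur m I i j = cooccur m I j i"
  unfolding cooccur_def hits_def by (simp add: conj_commute)

lemma quad_form_cooccur_mult:
  fixes x :: "nat \<Rightarrow> real" and M :: "nat \<Rightarrow> nat \<Rightarrow> real"
  assumes "\<forall>t<m. I t \<subseteq> {..<n}"
  shows "(\<Sum>i<n. \<Sum>j<n. x i * (cooccur m I i j * M i j) * x j)
           = (\<Sum>t<m. \<Sum>i\<in>I t. \<Sum>j\<in>I t. x i * M i j * x j)"
proof -
  have count: "real (cooccur m I i j) = (\<Sum>t<m. if i \<in> I t \<and> j \<in> I t then 1 else 0)" for i j
    by (simp add: cooccur_def hits_def sum.If_cases Int_def)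
  have "x i * (cooccur m I i j * M i j) * x j
          = (\<Sum>t<m. if i \<in> I t \<and> j \<in> I t then x i * M i j * x j else 0)" for i j
    unfolding count by (auto simp: sum_distrib_left sum_distrib_right intro!: sum.cong)
  then have "(\<Sum>i<n. \<Sum>j<n. x i * (cooccur m I i j * M i j) * x j)
               = (\<Sum>t<m. \<Sum>i<n. \<Sum>j<n. if i \<in> I t \<and> j \<in> I t then x i * M i j * x j else 0)"
    by (simp add: sum.swap[of _ "{..<m}"])
  also have "\<dots> = (\<Sum>t<m. \<Sum>i\<in>I t. \<Sum>j\<in>I t. x i * M i j * x j)"
  proof (rule sum.cong[OF refl])
    fix t assume "t \<in> {..<m}"
    then have restrict: "{..<n} \<inter> I t = I t"
      using assms by auto
    have "(\<Sum>i<n. \<Sum>j<n. if i \<in> I t \<and> j \<in> I t then x i * M i j * x j else 0)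
            = (\<Sum>i<n. if i \<in> I t then (\<Sum>j<n. if j \<in> I t then x i * M i j * x j else 0) else 0)"
      by (intro sum.cong) auto
    then show "(\<Sum>i<n. \<Sum>j<n. if i \<in> I t \<and> j \<in> I t then x i * M i j * x j else 0)
                 = (\<Sum>i\<in>I t. \<Sum>j\<in>I t. x i * M i j * x j)"
      by (simp add: sum.inter_restrict[symmetric] restrict)
  qed
  finally show ?thesis .
qed

lemma psd_sub_cooccur_mult:
  fixes M :: "nat \<Rightarrow> nat \<Rightarrow> real"
  assumes sub: "\<forall>t<m. I t \<subseteq> {..<n}" and M: "M \<in> S_I m I"
  shows "psd_sub (\<lambda>i j. cooccur m I i j * M i j) {..<n}"
proof -
  have psd: "psd_sub M (I t)" if "t < m" for t
    using M that by (simp add: S_I_def)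
  have "cooccur m I i j * M i j = cooccur m I j i * M j i" for i j
  proof (cases "cooccur m I i j = 0")
    case False
    then obtain t where "t < m" "i \<in> I t" "j \<in> I t"
      by (auto simp: cooccur_def hits_def)
    then show ?thesis
      using psd[of t] cooccur_sym[of m I i j] by (simp add: psd_sub_def)
  qed (simp add: cooccur_sym)
  moreover have "0 \<le> (\<Sum>i<n. \<Sum>j<n. x i * (cooccur m I i j * M i j) * x j)" for x
    unfolding quad_form_cooccur_mult[OF sub] by (rule sum_nonneg) (use psd in \<open>simp add: psd_sub_def\<close>)
  ultimately show ?thesis
    by (simp add: psd_sub_def)
qed

lemma dist_psd_le_of_cooccur_close:
  fixes d e \<tau> :: real
  assumes sub: "\<forall>t<m. I t \<subseteq> {..<n}" and M: "M \<in> S_I m I"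
    and pos: "0 < d + e" "0 \<le> \<tau>"
    and close: "\<forall>i<n. \<forall>j<n. \<bar>cooccur m I i j - (if i = j then d else e)\<bar> \<le> \<tau>"
  shows "dist_psd n M \<le> (\<bar>d - e\<bar> + 2 * \<tau>) / (d + e) * frob n M"
proof -
  define N where "N i j = 2 / (d + e) * (cooccur m I i j * M i j)" for i j
  have "psd_sub N {..<n}"
    unfolding N_def using pos by (intro psd_sub_scale psd_sub_cooccur_mult sub M) simp
  then have "dist_psd n M \<le> frob n (\<lambda>i j. M i j - N i j)"
    by (rule dist_psd_le_frob_diff)
  also have "\<dots> \<le> (\<bar>d - e\<bar> + 2 * \<tau>) / (d + e) * frob n M"
  proof (rule frob_le_scaled)
    show "0 \<le> (\<bar>d - e\<bar> + 2 * \<tau>) / (d + e)"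
      using pos by simp
    fix i j assume "i < n" "j < n"
    define E where "E = (if i = j then d else e)"
    have dev: "\<bar>cooccur m I i j - E\<bar> \<le> \<tau>"
      using close \<open>i < n\<close> \<open>j < n\<close> by (simp add: E_def)
    have "M i j - N i j = ((d + e - 2 * E) - 2 * (cooccur m I i j - E)) / (d + e) * M i j"
      using pos by (simp add: N_def field_simps)
    moreover have "\<bar>(d + e - 2 * E) - 2 * (cooccur m I i j - E)\<bar> \<le> \<bar>d - e\<bar> + 2 * \<tau>"
      using dev abs_ge_self[of "d - e"] abs_ge_minus_self[of "d - e"]
      by (simp add: E_def abs_le_iff split: if_splits)
    ultimately show "\<bar>M i j - N i j\<bar> \<le> (\<bar>d - e\<bar> + 2 * \<tau>) / (d + e) * \<bar>M i j\<bar>"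
      using pos by (simp add: abs_mult divide_right_mono mult_right_mono)
  qed
  finally show ?thesis .
qed

lemma set_sample_pmf:
  assumes "k \<le> n"
  shows "set_pmf (sample_pmf n k m) = PiE {..<m} (\<lambda>_. ksubsets n k)"
proof -
  have "ksubsets n k \<noteq> {}" "finite (ksubsets n k)"
    using lessThan_in_ksubsets[OF assms] finite_ksubsets by auto
  then show ?thesis
    by (simp add: sample_pmf_def PiE_eq_empty_iff finite_PiE)
qed

lemma frac_mult_pred_le:
  assumes "1 \<le> k" "k \<le> n"
  shows "real k * (real k - 1) / (real n * (real n - 1)) \<le> real k / real n"
proof -
  have "(real k - 1) / (real n - 1) \<le> 1"
    using assms by (cases "n = 1") simp_all
  then show ?thesis
    using mult_left_mono[of "(real k - 1) / (real n - 1)" 1 "real k / real n"] by simp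
qed

lemma prob_cooccur_deviation:
  fixes n k m :: nat and \<tau> :: real
  defines "d \<equiv> m * (real k / real n)"
    and "e \<equiv> m * (real k * (real k - 1) / (real n * (real n - 1)))"
  assumes ij: "i < n" "j < n" and k: "2 \<le> k" "k \<le> n" and \<tau>: "0 \<le> \<tau>" "\<tau> \<le> e"
  shows "measure_pmf.prob (sample_pmf n k m) {I. \<tau> < \<bar>real (cooccur m I i j) - (if i = j then d else e)\<bar>}
           \<le> 2 * exp (- \<tau>\<^sup>2 / (3 * d))"
proof -
  define K where "K = ksubsets n k"
  define \<mu> where "\<mu> = (if i = j then d else e)"
  have K: "finite K" "K \<noteq> {}"
    using lessThan_in_ksubsets[OF k(2)] finite_ksubsets by (auto simp: K_def)
  have \<mu>: "\<mu> = m * (card (K \<inter> {J. i \<in> J \<and> j \<in> J}) / card K)"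
    using ksubsets_fraction_containing[OF ij k] by (simp add: \<mu>_def d_def e_def K_def)
  have "e \<le> d"
    unfolding d_def e_def using frac_mult_pred_le[of k n] k by (intro mult_left_mono) auto
  then have \<mu>_bounds: "\<tau> \<le> \<mu>" "\<mu> \<le> d"
    using \<tau> by (auto simp: \<mu>_def)
  have "measure_pmf.prob (sample_pmf n k m) {I. \<tau> < \<bar>cooccur m I i j - \<mu>\<bar>} \<le> 2 * exp (- \<tau>\<^sup>2 / (3 * \<mu>))"
    using prob_hits_deviation_chernoff[OF K \<mu> \<tau>(1) \<mu>_bounds(1)]
    by (simp add: sample_pmf_def K_def cooccur_def)
  also have "\<dots> \<le> 2 * exp (- \<tau>\<^sup>2 / (3 * d))"
  proof (cases "\<tau> = 0")
    case False
    then have "0 < \<mu>"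
      using \<tau> \<mu>_bounds by linarith
    then have "\<tau>\<^sup>2 / (3 * d) \<le> \<tau>\<^sup>2 / (3 * \<mu>)"
      using \<mu>_bounds by (intro frac_le) auto
    then show ?thesis
      by simp
  qed simp
  finally show ?thesis
    by (simp add: \<mu>_def)
qed

lemma prob_cooccur_close:
  fixes n k m :: nat and \<tau> :: real
  defines "d \<equiv> m * (real k / real n)"
    and "e \<equiv> m * (real k * (real k - 1) / (real n * (real n - 1)))"
  assumes k: "2 \<le> k" "k \<le> n" and \<tau>: "0 \<le> \<tau>" "\<tau> \<le> e"
  shows "1 - 2 * (real n)\<^sup>2 * exp (- \<tau>\<^sup>2 / (3 * d))
           \<le> measure_pmf.prob (sample_pmf n k m)
                {I. \<forall>i<n. \<forall>j<n. \<bar>real (cooccur m I i j) - (if i = j then d else e)\<bar> \<le> \<tau>}"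
proof -
  let ?P = "measure_pmf.prob (sample_pmf n k m)"
  define bad where "bad ij = {I. \<tau> < \<bar>cooccur m I (fst ij) (snd ij) - (if fst ij = snd ij then d else e)\<bar>}"
    for ij
  have "?P (\<Union>ij\<in>{..<n} \<times> {..<n}. bad ij) \<le> (\<Sum>ij\<in>{..<n} \<times> {..<n}. ?P (bad ij))"
    by (rule measure_pmf.finite_measure_subadditive_finite) auto
  also have "\<dots> \<le> card ({..<n} \<times> {..<n}) * (2 * exp (- \<tau>\<^sup>2 / (3 * d)))"
  proof (rule sum_bounded_above)
    fix ij assume "ij \<in> {..<n} \<times> {..<n}"
    then obtain i j where "ij = (i, j)" "i < n" "j < n"
      by auto
    then show "?P (bad ij) \<le> 2 * exp (- \<tau>\<^sup>2 / (3 * d))"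
      using prob_cooccur_deviation[OF \<open>i < n\<close> \<open>j < n\<close> k \<tau>[unfolded e_def], folded d_def e_def]
      by (simp only: bad_def fst_conv snd_conv)
  qed
  finally have "1 - 2 * (real n)\<^sup>2 * exp (- \<tau>\<^sup>2 / (3 * d)) \<le> 1 - ?P (\<Union>ij\<in>{..<n} \<times> {..<n}. bad ij)"
    by (simp add: power2_eq_square)
  also have "\<dots> = ?P (UNIV - (\<Union>ij\<in>{..<n} \<times> {..<n}. bad ij))"
    using measure_pmf.prob_compl[of "\<Union>ij\<in>{..<n} \<times> {..<n}. bad ij"] by simp
  also have "UNIV - (\<Union>ij\<in>{..<n} \<times> {..<n}. bad ij)
               = {I. \<forall>i<n. \<forall>j<n. \<bar>cooccur m I i j - (if i = j then d else e)\<bar> \<le> \<tau>}"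
    unfolding bad_def by (auto simp: not_less split del: if_split) (meson not_le)
  finally show ?thesis .
qed

lemma dist_bar_S_I_le_of_cooccur_close:
  fixes d e \<tau> :: real
  assumes "0 < n" "\<forall>t<m. I t \<subseteq> {..<n}" "0 < d + e" "0 \<le> \<tau>"
    and "\<forall>i<n. \<forall>j<n. \<bar>cooccur m I i j - (if i = j then d else e)\<bar> \<le> \<tau>"
  shows "dist_bar n (S_I m I) \<le> (\<bar>d - e\<bar> + 2 * \<tau>) / (d + e)"
proof (rule dist_bar_le)
  show "\<exists>M\<in>S_I m I. frob n M = 1"
    by (rule ex_unit_frob_in_S_I[OF assms(1)])
  fix M assume "M \<in> S_I m I" "frob n M = 1"
  then show "dist_psd n M \<le> (\<bar>d - e\<bar> + 2 * \<tau>) / (d + e)"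
    using dist_psd_le_of_cooccur_close[OF assms(2) \<open>M \<in> S_I m I\<close> assms(3-5)] by simp
qed

lemma dist_bar_S_I_le_1:
  assumes "0 < n"
  shows "dist_bar n (S_I m I) \<le> 1"
proof (rule dist_bar_le)
  show "\<exists>M\<in>S_I m I. frob n M = 1"
    by (rule ex_unit_frob_in_S_I[OF assms])
  show "dist_psd n M \<le> 1" if "frob n M = 1" for M
    using dist_psd_le_frob[of n M] that by simp
qed

lemma prob_dist_bar_S_I_le:
  fixes n k m :: nat and \<tau> :: real
  defines "d \<equiv> m * (real k / real n)"
    and "e \<equiv> m * (real k * (real k - 1) / (real n * (real n - 1)))"
  assumes k: "2 \<le> k" "k \<le> n" and m: "0 < m" and \<tau>: "0 \<le> \<tau>" "\<tau> \<le> e"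
  shows "1 - 2 * (real n)\<^sup>2 * exp (- \<tau>\<^sup>2 / (3 * d))
           \<le> measure_pmf.prob (sample_pmf n k m) {I. dist_bar n (S_I m I) \<le> (d - e + 2 * \<tau>) / (d + e)}"
proof -
  have "e \<le> d"
    unfolding d_def e_def using frac_mult_pred_le[of k n] k by (intro mult_left_mono) auto
  moreover have "0 < d"
    using k m by (simp add: d_def)
  ultimately have de: "0 < d + e" "\<bar>d - e\<bar> = d - e"
    using \<tau> by auto
  have "1 - 2 * (real n)\<^sup>2 * exp (- \<tau>\<^sup>2 / (3 * d))
          \<le> measure_pmf.prob (sample_pmf n k m)
               {I. \<forall>i<n. \<forall>j<n. \<bar>cooccur m I i j - (if i = j then d else e)\<bar> \<le> \<tau>}"
    using prob_cooccur_close[OF k \<tau>[unfolded e_def]] unfolding d_def e_def .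
  also have "\<dots> \<le> measure_pmf.prob (sample_pmf n k m) {I. dist_bar n (S_I m I) \<le> (d - e + 2 * \<tau>) / (d + e)}"
  proof (rule measure_pmf.finite_measure_mono_AE)
    show "AE I in measure_pmf (sample_pmf n k m). I \<in> {I. \<forall>i<n. \<forall>j<n. \<bar>cooccur m I i j - (if i = j then d else e)\<bar> \<le> \<tau>}
            \<longrightarrow> I \<in> {I. dist_bar n (S_I m I) \<le> (d - e + 2 * \<tau>) / (d + e)}"
      unfolding AE_measure_pmf_iff set_sample_pmf[OF k(2)]
      using k de \<tau>(1) dist_bar_S_I_le_of_cooccur_close[of n m _ d e \<tau>]
      by (auto simp: PiE_iff ksubsets_def)
  qed simp
  finally show ?thesis .
qed

lemma sample_size_chernoff_parameters:
  fixes m N K \<epsilon> \<delta> :: real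
  defines "d \<equiv> m * (K / N)" and "e \<equiv> m * (K * (K - 1) / (N * (N - 1)))"
  assumes K: "1 < K" "K < N" and \<epsilon>: "0 < \<epsilon>" and \<delta>: "0 < \<delta>" "\<delta> < 1"
    and ratio: "(1 + \<epsilon>) * (N - K) / (N + K - 2) < 1"
    and m: "12 * N * (N - 1)\<^sup>2 / (\<epsilon>\<^sup>2 * (N - K)\<^sup>2 * K) * ln (2 * N\<^sup>2 / \<delta>) \<le> m"
  shows "0 < m" "0 \<le> \<epsilon> * (d - e) / 2" "\<epsilon> * (d - e) / 2 \<le> e"
    and "(d - e + 2 * (\<epsilon> * (d - e) / 2)) / (d + e) = (1 + \<epsilon>) * (N - K) / (N + K - 2)"
    and "2 * N\<^sup>2 * exp (- (\<epsilon> * (d - e) / 2)\<^sup>2 / (3 * d)) \<le> \<delta>"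
proof -
  define L where "L = ln (2 * N\<^sup>2 / \<delta>)"
  define X where "X = 12 * N * (N - 1)\<^sup>2 / (\<epsilon>\<^sup>2 * (N - K)\<^sup>2 * K)"
  have "1 < N\<^sup>2"
    using K by (intro one_less_power) auto
  then have "1 < 2 * N\<^sup>2 / \<delta>"
    using \<delta> by (simp add: less_divide_eq)
  then have L: "0 < L"
    by (simp add: L_def)
  have X: "0 < X"
    using K \<epsilon> by (simp add: X_def)
  show m0: "0 < m"
    using m[folded X_def L_def] L X by (meson less_le_trans mult_pos_pos)
  define c where "c = m * K / (N * (N - 1))"
  have c: "0 < c"
    using m0 K by (simp add: c_def)
  have gap: "d - e = c * (N - K)" "d + e = c * (N + K - 2)" "d = c * (N - 1)" "e = c * (K - 1)"
    using K by (simp_all add: d_def e_def c_def field_simps)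
  show "0 \<le> \<epsilon> * (d - e) / 2"
    using \<epsilon> c K by (simp add: gap)
  have "\<epsilon> * (N - K) \<le> 2 * (K - 1)"
    using ratio K by (simp add: divide_simps algebra_simps split: if_splits)
  then show "\<epsilon> * (d - e) / 2 \<le> e"
    using mult_left_mono[of "\<epsilon> * (N - K)" "2 * (K - 1)" c] c by (simp add: gap field_simps)
  have "d - e + 2 * (\<epsilon> * (d - e) / 2) = c * ((1 + \<epsilon>) * (N - K))"
    by (simp add: gap field_simps)
  then show "(d - e + 2 * (\<epsilon> * (d - e) / 2)) / (d + e) = (1 + \<epsilon>) * (N - K) / (N + K - 2)"
    using c by (simp add: gap(2))
  have "L \<le> m / X"
    using m[folded X_def L_def] X by (simp add: pos_le_divide_eq mult.commute)
  also have "m / X = \<epsilon>\<^sup>2 * c * (N - K)\<^sup>2 / (12 * (N - 1))"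
  proof -
    have "N \<noteq> 0" "N - 1 \<noteq> 0" "N - K \<noteq> 0" "K \<noteq> 0" "\<epsilon> \<noteq> 0"
      using K \<epsilon> by auto
    then show ?thesis
      unfolding c_def X_def by (simp add: field_simps power2_eq_square)
  qed
  also have "\<dots> = (\<epsilon> * (c * (N - K)) / 2)\<^sup>2 / (3 * (c * (N - 1)))"
    using c by (simp add: power2_eq_square)
  also have "\<dots> = (\<epsilon> * (d - e) / 2)\<^sup>2 / (3 * d)"
    by (simp only: gap(1), simp only: gap(3))
  finally have "exp (- (\<epsilon> * (d - e) / 2)\<^sup>2 / (3 * d)) \<le> exp (- L)"
    by simp
  also have "exp (- L) = \<delta> / (2 * N\<^sup>2)"
    using K \<delta> by (simp add: L_def exp_minus)
  finally show "2 * N\<^sup>2 * exp (- (\<epsilon> * (d - e) / 2)\<^sup>2 / (3 * d)) \<le> \<delta>"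
    using K by (simp add: field_simps)
qed

theorem theorem5:
  fixes n k :: nat and \<epsilon> \<delta> :: real
  assumes "2 \<le> k" and "k \<le> n - 1" and "\<epsilon> > 0" and "\<delta> > 0"
  defines "m \<equiv> nat \<lceil>12 * real n * (real n - 1)^2 / (\<epsilon>^2 * (real n - real k)^2 * real k)
                      * ln (2 * (real n)^2 / \<delta>)\<rceil>"
  shows "measure_pmf.prob (sample_pmf n k m)
           {I. dist_bar n (S_I m I) \<le> (1 + \<epsilon>) * (real n - real k) / (real n + real k - 2)}
         \<ge> 1 - \<delta>"
proof -
  let ?\<beta> = "(1 + \<epsilon>) * (real n - real k) / (real n + real k - 2)"
  have k: "2 \<le> k" "k < n"
    using assms(1,2) by auto
  \<comment> \<open>For \<open>?\<beta> \<ge> 1\<close> the event is certain; \<open>?\<beta> < 1\<close> keeps the allowed deviation below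
    the smaller mean, as the upper Chernoff tail requires.\<close>
  consider "1 \<le> \<delta>" | "1 \<le> ?\<beta>" | "\<delta> < 1" "?\<beta> < 1"
    by linarith
  then show ?thesis
  proof cases
    case 1
    then show ?thesis
      using measure_nonneg[of "measure_pmf (sample_pmf n k m)" "{I. dist_bar n (S_I m I) \<le> ?\<beta>}"]
      by linarith
  next
    case 2
    then have "dist_bar n (S_I m I) \<le> ?\<beta>" for I
      using dist_bar_S_I_le_1[of n m I] k by linarith
    then show ?thesis
      using assms(4) by simp
  next
    case 3
    have "12 * real n * (real n - 1)\<^sup>2 / (\<epsilon>\<^sup>2 * (real n - real k)\<^sup>2 * real k) * ln (2 * (real n)\<^sup>2 / \<delta>) \<le> m"
      unfolding m_def by (rule real_nat_ceiling_ge)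
    note parameters = sample_size_chernoff_parameters[OF _ _ assms(3,4) 3 this]
    show ?thesis
      using prob_dist_bar_S_I_le[OF k(1) _ _ parameters(2,3)] parameters(1,4,5) k by simp
  qed
qed

end
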